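(* Suppose that for some instance of the SEJR subfamily, Alg3 uses $O(o_3)$ arithmetic operations. Then the instance can be computed using $O(nmk+o_3)$ arithmetic operations, when dissatisfaction levels are maintained as follows: initially $\ell(c,\emptyset)=\lfloor kn_c/n\rfloor$, and after each addition to $W$, for each $c\in C\setminus W$ the stored value is decremented by 1 while it exceeds $\lfloor\frac{k}{n}|\{i: c\in A_i,\ |A_i\cap W|<\text{(stored value)}\}|\rfloor$.
   Context: Setting: voters $N=\{1,\dots,n\}$, candidates $C=\{c_1,\dots,c_m\}$, approval ballots $A_i\subseteq C$, $k\le m$ a positive integer, $N_c=\{i: c\in A_i\}$, $n_c=|N_c|$. The profile is given as an $n\times m$ 0/1 table, and the counts $|A_i\cap W|$ are stored in an array of $n$ counters updated when a candidate is added; complexity counts arithmetic operations. Dissatisfaction level: for $W\subseteq C$ with $|W|\le k$ and $c\in C\setminus W$, $\ell(c,W)$ is the largest nonnegative integer $\ell$ with $\ell=\lfloor \frac{k}{n}|\{i\in N: c\in A_i,\ |A_i\cap W|<\ell\}|\rfloor$. SEJR subfamily (parametrized by a subprocedure Alg3): start with $W=\emptyset$. While $|W|<k$ and $\max_{c\in C\setminus W}\ell(c,W)>0$, add to $W$ a candidate $c\in C\setminus W$ maximizing $\ell(c,W)$ (ties broken arbitrarily). Afterwards, if $|W|<k$, Alg3 adds candidates from $C\setminus W$ until $|W|=k$. Output $W$. *)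

theory Defs
  imports Complex_Main
begin

text \<open>Voters are 0..<n, candidates 0..<m. The profile is the n x m 0/1 table
  A :: nat => nat => bool, where A i c means voter i approves candidate c.\<close>

definition ballot :: "(nat \<Rightarrow> nat \<Rightarrow> bool) \<Rightarrow> nat \<Rightarrow> nat \<Rightarrow> nat set" where
  "ballot A m i = {c. c < m \<and> A i c}"

definition unsat :: "(nat \<Rightarrow> nat \<Rightarrow> bool) \<Rightarrow> nat \<Rightarrow> nat \<Rightarrow> nat set \<Rightarrow> nat \<Rightarrow> nat \<Rightarrow> nat set" where
  "unsat A n m W c l = {i. i < n \<and> A i c \<and> card (ballot A m i \<inter> W) < l}"

definition ell :: "(nat \<Rightarrow> nat \<Rightarrow> bool) \<Rightarrow> nat \<Rightarrow> nat \<Rightarrow> nat \<Rightarrow> nat set \<Rightarrow> nat \<Rightarrow> nat" where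
  "ell A n m k W c = (GREATEST l. int l = \<lfloor>real k / real n * real (card (unsat A n m W c l))\<rfloor>)"

text \<open>First phase: the greedy loop, with arbitrary tie-breaking (nondeterministic).
  sejr_phase1 A n m k W W' : starting from W the loop may terminate with W'.\<close>
inductive sejr_phase1 :: "(nat \<Rightarrow> nat \<Rightarrow> bool) \<Rightarrow> nat \<Rightarrow> nat \<Rightarrow> nat \<Rightarrow> nat set \<Rightarrow> nat set \<Rightarrow> bool"
  for A n m k where
  stop: "\<not> (card W < k \<and> (\<exists>c\<in>{..<m} - W. ell A n m k W c > 0)) \<Longrightarrow> sejr_phase1 A n m k W W"
| step: "card W < k \<Longrightarrow> c \<in> {..<m} - W \<Longrightarrow> ell A n m k W c > 0 \<Longrightarrow>
         (\<forall>d\<in>{..<m} - W. ell A n m k W d \<le> ell A n m k W c) \<Longrightarrow>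
         sejr_phase1 A n m k (insert c W) W' \<Longrightarrow> sejr_phase1 A n m k W W'"

text \<open>Alg3 is a subprocedure: given the profile, n, m, k and the current W (with |W| < k)
  it returns the list of candidates it adds, together with its number of arithmetic operations.\<close>
type_synonym alg3_t = "(nat \<Rightarrow> nat \<Rightarrow> bool) \<Rightarrow> nat \<Rightarrow> nat \<Rightarrow> nat \<Rightarrow> nat set \<Rightarrow> nat list \<times> nat"

definition sejr_outcome :: "(nat \<Rightarrow> nat \<Rightarrow> bool) \<Rightarrow> nat \<Rightarrow> nat \<Rightarrow> nat \<Rightarrow> alg3_t \<Rightarrow> nat set \<Rightarrow> bool" where
  "sejr_outcome A n m k alg3 Wout \<longleftrightarrow>
     (\<exists>W. sejr_phase1 A n m k {} W \<and>
          Wout = (if card W < k then W \<union> set (fst (alg3 A n m k W)) else W))"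

section \<open>Cost-instrumented implementation (each function returns (result, #operations))\<close>

fun cnt_below :: "(nat \<Rightarrow> nat \<Rightarrow> bool) \<Rightarrow> (nat \<Rightarrow> nat) \<Rightarrow> nat \<Rightarrow> nat \<Rightarrow> nat list \<Rightarrow> nat \<times> nat" where
  "cnt_below A cnt c l [] = (0, 0)"
| "cnt_below A cnt c l (i # is) =
     (let (r, t) = cnt_below A cnt c l is in ((if A i c \<and> cnt i < l then r + 1 else r), t + 1))"

text \<open>Decrement the stored value v while v > floor(k/n * |{i : c in A_i, cnt i < v}|).
  Each test costs the scan (n operations) plus 2 (floor computation, comparison);
  each decrement costs 1.\<close>
fun decr :: "(nat \<Rightarrow> nat \<Rightarrow> bool) \<Rightarrow> nat \<Rightarrow> nat \<Rightarrow> (nat \<Rightarrow> nat) \<Rightarrow> nat \<Rightarrow> nat \<Rightarrow> nat \<times> nat" where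
  "decr A n k cnt c 0 = (0, n + 2)"
| "decr A n k cnt c (Suc v) =
     (let (s, t) = cnt_below A cnt c (Suc v) [0..<n] in
      if Suc v > k * s div n
      then (let (r, t') = decr A n k cnt c v in (r, t + 3 + t'))
      else (Suc v, t + 2))"

text \<open>Select a candidate outside W with maximal positive stored value (smallest index on ties);
  returns (candidate, value, cost); value 0 means no candidate with positive value.\<close>
fun sel :: "(nat \<Rightarrow> nat) \<Rightarrow> nat set \<Rightarrow> nat list \<Rightarrow> nat \<times> nat \<times> nat" where
  "sel lev W [] = (0, 0, 0)"
| "sel lev W (c # cs) =
     (let (b, v, t) = sel lev W cs in
      if c \<notin> W \<and> lev c \<ge> v \<and> lev c > 0 then (c, lev c, t + 1) else (b, v, t + 1))"

fun upd_levels :: "(nat \<Rightarrow> nat \<Rightarrow> bool) \<Rightarrow> nat \<Rightarrow> nat \<Rightarrow> (nat \<Rightarrow> nat) \<Rightarrow> nat set \<Rightarrow> (nat \<Rightarrow> nat)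
                    \<Rightarrow> nat list \<Rightarrow> (nat \<Rightarrow> nat) \<times> nat" where
  "upd_levels A n k cnt W lev [] = (lev, 0)"
| "upd_levels A n k cnt W lev (c # cs) =
     (let (lev', t) = upd_levels A n k cnt W lev cs in
      if c \<in> W then (lev', t + 1)
      else (let (r, t2) = decr A n k cnt c (lev' c) in (lev'(c := r), t + 1 + t2)))"

text \<open>Initial stored values floor(k n_c / n): n operations to count n_c, 2 for the floor.\<close>
fun init_levels :: "(nat \<Rightarrow> nat \<Rightarrow> bool) \<Rightarrow> nat \<Rightarrow> nat \<Rightarrow> nat list \<Rightarrow> (nat \<Rightarrow> nat) \<times> nat" where
  "init_levels A n k [] = ((\<lambda>_. 0), 0)"
| "init_levels A n k (c # cs) =
     (let (lev, t) = init_levels A n k cs;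
          (nc, t1) = cnt_below A (\<lambda>_. 0) c 1 [0..<n] in
      (lev(c := k * nc div n), t + t1 + 2))"

text \<open>The greedy loop. State: (W, |W|, counters |A_i \<inter> W|, stored values). The fuel argument
  (instantiated with k) only serves to make the recursion structural.\<close>
fun phase1 :: "(nat \<Rightarrow> nat \<Rightarrow> bool) \<Rightarrow> nat \<Rightarrow> nat \<Rightarrow> nat \<Rightarrow> nat
               \<Rightarrow> nat set \<times> nat \<times> (nat \<Rightarrow> nat) \<times> (nat \<Rightarrow> nat)
               \<Rightarrow> (nat set \<times> nat \<times> (nat \<Rightarrow> nat) \<times> (nat \<Rightarrow> nat)) \<times> nat" where
  "phase1 A n m k 0 st = (st, 1)"
| "phase1 A n m k (Suc f) (W, sz, cnt, lev) =
     (if sz \<ge> k then ((W, sz, cnt, lev), 1)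
      else (let (c, v, t1) = sel lev W [0..<m] in
            if v = 0 then ((W, sz, cnt, lev), t1 + 2)
            else (let W' = insert c W;
                      cnt' = (\<lambda>i. if i < n \<and> A i c then cnt i + 1 else cnt i);
                      (lev', t2) = upd_levels A n k cnt' W' lev [0..<m];
                      (st', t3) = phase1 A n m k f (W', sz + 1, cnt', lev')
                  in (st', t1 + 2 + n + t2 + t3))))"

definition sejr_fast :: "alg3_t \<Rightarrow> (nat \<Rightarrow> nat \<Rightarrow> bool) \<Rightarrow> nat \<Rightarrow> nat \<Rightarrow> nat \<Rightarrow> nat set \<times> nat" where
  "sejr_fast alg3 A n m k =
     (let (lev0, t0) = init_levels A n k [0..<m];
          ((W, sz, cnt, lev), t1) = phase1 A n m k k ({}, 0, (\<lambda>_. 0), lev0)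
      in if sz < k then (let (xs, t3) = alg3 A n m k W in (W \<union> set xs, t0 + n + t1 + 1 + t3))
         else (W, t0 + n + t1 + 1))"

end

theory Submission
  imports Defs
begin

text \<open>The level \<open>ell W c\<close> is the greatest fixed point of the monotone map
  \<open>F l = \<lfloor>k |{i \<in> N\<^sub>c. |A\<^sub>i \<inter> W| < l}| / n\<rfloor>\<close>, which is bounded by \<open>k\<close> and
  antimonotone in \<open>W\<close>. So levels only drop when \<open>W\<close> grows, and descending from the old level
  stops exactly at the new one: a value \<open>v\<close> with \<open>F v < v\<close> is not a fixed point, and every
  fixed point lies below it. A test costs \<open>O(n)\<close>; a round costs \<open>O(nm)\<close> plus \<open>O(n)\<close> per
  decrement. Initial levels are at most \<open>k\<close>, so there are at most \<open>mk\<close> decrements overall, and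
  with at most \<open>k\<close> rounds the greedy phase costs \<open>O(nmk)\<close>.\<close>

lemma Greatest_fixpoint_nat:
  fixes F :: "nat \<Rightarrow> nat"
  assumes "F 0 = 0" and "\<And>x. F x \<le> K"
  shows "F (GREATEST x. F x = x) = (GREATEST x. F x = x)"
  by (rule GreatestI_nat[where k = 0 and b = K]) (use assms in metis)+

lemma le_Greatest_fixpoint_nat:
  fixes F :: "nat \<Rightarrow> nat"
  assumes "mono F" and bounded: "\<And>x. F x \<le> K" and "l \<le> F l"
  shows "l \<le> (GREATEST x. F x = x)"
  using \<open>l \<le> F l\<close>
proof (induction "K - l" arbitrary: l rule: less_induct)
  case less
  show ?case
  proof (cases "F l = l")
    case True
    then show ?thesis
      by (rule Greatest_le_nat[where b = K]) (metis bounded)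
  next
    case False
    with less.prems have "l < F l" by simp
    moreover have "F l \<le> F (F l)" using \<open>mono F\<close> less.prems by (rule monoD)
    moreover have "K - F l < K - l" using \<open>l < F l\<close> bounded[of l] by simp
    ultimately show ?thesis using less.hyps by fastforce
  qed
qed

definition level_map :: "(nat \<Rightarrow> nat \<Rightarrow> bool) \<Rightarrow> nat \<Rightarrow> nat \<Rightarrow> nat \<Rightarrow> nat set \<Rightarrow> nat \<Rightarrow> nat \<Rightarrow> nat" where
  "level_map A n m k W c l = k * card (unsat A n m W c l) div n"

lemma ell_eq_Greatest_level_map: "ell A n m k W c = (GREATEST l. level_map A n m k W c l = l)"
proof -
  have "\<lfloor>real k / real n * real s\<rfloor> = int (k * s div n)" for s
    using floor_divide_of_nat_eq[of "k * s" n] by simp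
  then show ?thesis
    unfolding ell_def level_map_def by (auto intro!: arg_cong[where f = Greatest])
qed

lemma level_map_0 [simp]: "level_map A n m k W c 0 = 0"
  by (simp add: level_map_def unsat_def)

lemma mono_level_map: "mono (level_map A n m k W c)"
  unfolding level_map_def unsat_def
  by (intro monoI div_le_mono mult_le_mono2 card_mono) auto

lemma level_map_le: "0 < n \<Longrightarrow> level_map A n m k W c l \<le> k"
proof -
  assume "0 < n"
  have "card (unsat A n m W c l) \<le> n"
    using card_mono[of "{..<n}" "unsat A n m W c l"] by (auto simp: unsat_def)
  then have "level_map A n m k W c l \<le> k * n div n"
    unfolding level_map_def by (intro div_le_mono mult_le_mono2)
  with \<open>0 < n\<close> show ?thesis by simp
qed

lemma level_map_antimono:
  assumes "W \<subseteq> W'"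
  shows "level_map A n m k W' c l \<le> level_map A n m k W c l"
proof -
  have "card (ballot A m i \<inter> W) \<le> card (ballot A m i \<inter> W')" for i
    using assms by (intro card_mono) (auto simp: ballot_def)
  then have "unsat A n m W' c l \<subseteq> unsat A n m W c l"
    unfolding unsat_def using le_less_trans by blast
  then show ?thesis
    unfolding level_map_def by (intro div_le_mono mult_le_mono2 card_mono) (auto simp: unsat_def)
qed

lemma ell_fixpoint: "0 < n \<Longrightarrow> level_map A n m k W c (ell A n m k W c) = ell A n m k W c"
  unfolding ell_eq_Greatest_level_map by (rule Greatest_fixpoint_nat) (auto intro: level_map_le)

lemma le_ell: "0 < n \<Longrightarrow> l \<le> level_map A n m k W c l \<Longrightarrow> l \<le> ell A n m k W c"
  unfolding ell_eq_Greatest_level_map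
  by (rule le_Greatest_fixpoint_nat[OF mono_level_map]) (auto intro: level_map_le)

lemma ell_antimono: "0 < n \<Longrightarrow> W \<subseteq> W' \<Longrightarrow> ell A n m k W' c \<le> ell A n m k W c"
  by (metis le_ell ell_fixpoint level_map_antimono)

lemma ell_le: "0 < n \<Longrightarrow> ell A n m k W c \<le> k"
  by (metis ell_fixpoint level_map_le)

lemma ell_empty: "0 < n \<Longrightarrow> ell A n m k {} c = k * card {i. i < n \<and> A i c} div n"
proof -
  assume "0 < n"
  define q where "q = k * card {i. i < n \<and> A i c} div n"
  have map_empty: "level_map A n m k {} c l = (if l = 0 then 0 else q)" for l
    by (simp add: level_map_def unsat_def q_def)
  have "ell A n m k {} c \<le> q"
    using ell_fixpoint[OF \<open>0 < n\<close>, of A m k "{}" c] by (simp add: map_empty split: if_splits)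
  moreover have "q \<le> ell A n m k {} c"
    using le_ell[OF \<open>0 < n\<close>, of q] by (simp add: map_empty)
  ultimately show ?thesis by (simp add: q_def)
qed

definition counts :: "(nat \<Rightarrow> nat \<Rightarrow> bool) \<Rightarrow> nat \<Rightarrow> nat \<Rightarrow> nat set \<Rightarrow> (nat \<Rightarrow> nat) \<Rightarrow> bool" where
  "counts A n m W cnt \<longleftrightarrow> (\<forall>i<n. cnt i = card (ballot A m i \<inter> W))"

lemma counts_empty: "counts A n m {} (\<lambda>_. 0)"
  by (simp add: counts_def)

lemma counts_insert:
  assumes "counts A n m W cnt" and "b < m" and "b \<notin> W" and "finite W"
  shows "counts A n m (insert b W) (\<lambda>i. if i < n \<and> A i b then cnt i + 1 else cnt i)"
  unfolding counts_def
proof (intro allI impI)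
  fix i assume "i < n"
  have "ballot A m i \<inter> insert b W = (if A i b then insert b (ballot A m i \<inter> W) else ballot A m i \<inter> W)"
    using \<open>b < m\<close> by (auto simp: ballot_def)
  then show "(if i < n \<and> A i b then cnt i + 1 else cnt i) = card (ballot A m i \<inter> insert b W)"
    using assms \<open>i < n\<close> by (simp add: counts_def)
qed

lemma cnt_below_eq: "cnt_below A cnt c l xs = (length (filter (\<lambda>i. A i c \<and> cnt i < l) xs), length xs)"
  by (induction xs) (auto split: prod.splits)

lemma cnt_below_counts:
  assumes "counts A n m W cnt"
  shows "cnt_below A cnt c l [0..<n] = (card (unsat A n m W c l), n)"
proof -
  have "length (filter (\<lambda>i. A i c \<and> cnt i < l) [0..<n]) = card {i. i < n \<and> A i c \<and> cnt i < l}"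
    by (subst distinct_length_filter) (auto intro!: arg_cong[where f = card])
  also have "{i. i < n \<and> A i c \<and> cnt i < l} = unsat A n m W c l"
    using assms by (auto simp: unsat_def counts_def)
  finally show ?thesis by (simp add: cnt_below_eq)
qed

lemma decr_eq:
  assumes "0 < n" and "counts A n m W cnt" and "ell A n m k W c \<le> v"
  shows "decr A n k cnt c v = (ell A n m k W c, (v - ell A n m k W c) * (n + 3) + n + 2)"
  using \<open>ell A n m k W c \<le> v\<close>
proof (induction v)
  case 0
  then show ?case by simp
next
  case (Suc v)
  let ?l = "ell A n m k W c"
  have test: "(k * fst (cnt_below A cnt c (Suc v) [0..<n]) div n) = level_map A n m k W c (Suc v)"
    using cnt_below_counts[OF assms(2)] by (simp add: level_map_def)
  show ?case
  proof (cases "Suc v > level_map A n m k W c (Suc v)")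
    case True
    then have "?l \<noteq> Suc v" using ell_fixpoint[OF \<open>0 < n\<close>, of A m k W c] by auto
    with Suc.prems have "?l \<le> v" by simp
    with Suc.IH True test show ?thesis
      by (simp add: cnt_below_counts[OF assms(2)] Suc_diff_le)
  next
    case False
    then have "?l = Suc v" using le_ell[OF \<open>0 < n\<close>] Suc.prems by (metis le_antisym not_less)
    with False test show ?thesis
      by (simp add: cnt_below_counts[OF assms(2)])
  qed
qed

lemma sel_spec:
  "sel lev W cs = (b, v, t) \<Longrightarrow> t = length cs \<and> (v = 0 \<longrightarrow> (\<forall>c\<in>set cs. c \<notin> W \<longrightarrow> lev c = 0))
   \<and> (0 < v \<longrightarrow> b \<in> set cs \<and> b \<notin> W \<and> lev b = v \<and> (\<forall>c\<in>set cs. c \<notin> W \<longrightarrow> lev c \<le> v))"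
  by (induction cs arbitrary: b v t) (auto split: prod.splits if_splits)

lemma upd_levels_eq:
  "distinct cs \<Longrightarrow> upd_levels A n k cnt W lev cs =
     (\<lambda>c. if c \<in> set cs \<and> c \<notin> W then fst (decr A n k cnt c (lev c)) else lev c,
      \<Sum>c\<leftarrow>cs. if c \<in> W then 1 else 1 + snd (decr A n k cnt c (lev c)))"
  by (induction cs) (auto split: prod.splits simp: fun_eq_iff)

lemma init_levels_eq:
  "0 < n \<Longrightarrow> init_levels A n k cs = (\<lambda>c. if c \<in> set cs then ell A n m k {} c else 0, length cs * (n + 2))"
proof -
  assume "0 < n"
  have "cnt_below A (\<lambda>_. 0) c 1 [0..<n] = (card {i. i < n \<and> A i c}, n)" for c
    using cnt_below_counts[OF counts_empty] by (simp add: unsat_def)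
  then show ?thesis
    by (induction cs) (auto simp: fun_eq_iff ell_empty[OF \<open>0 < n\<close>])
qed

text \<open>Each decrement costs \<open>n + 3\<close>, so \<open>(n + 3) * (\<Sum>c<m. lev c)\<close> serves as a potential
  that pays for all decrements of a round.\<close>

lemma upd_levels_round:
  assumes "0 < n" and "counts A n m W' cnt" and "W \<subseteq> W'"
    and levels: "\<forall>c<m. c \<notin> W \<longrightarrow> lev c = ell A n m k W c"
    and upd: "upd_levels A n k cnt W' lev [0..<m] = (lev', t)"
  shows "\<forall>c<m. c \<notin> W' \<longrightarrow> lev' c = ell A n m k W' c"
    and "t + (n + 3) * (\<Sum>c<m. lev' c) \<le> m * (n + 3) + (n + 3) * (\<Sum>c<m. lev c)"
proof -
  define g where "g c = (if c \<in> W' then 1 else 1 + snd (decr A n k cnt c (lev c)))" for c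
  have below: "ell A n m k W' c \<le> lev c" if "c < m" "c \<notin> W'" for c
    using that levels \<open>W \<subseteq> W'\<close> ell_antimono[OF \<open>0 < n\<close> \<open>W \<subseteq> W'\<close>] by auto
  have decr: "decr A n k cnt c (lev c) = (ell A n m k W' c, (lev c - ell A n m k W' c) * (n + 3) + n + 2)"
    if "c < m" "c \<notin> W'" for c
    using decr_eq[OF \<open>0 < n\<close> assms(2) below[OF that]] .
  have lev': "lev' c = (if c \<notin> W' then ell A n m k W' c else lev c)" if "c < m" for c
    using upd that decr by (auto simp: upd_levels_eq)
  then show "\<forall>c<m. c \<notin> W' \<longrightarrow> lev' c = ell A n m k W' c" by simp
  have "t = (\<Sum>c<m. g c)"
    using upd by (simp add: upd_levels_eq g_def sum_list_distinct_conv_sum_set atLeast0LessThan)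
  have potential: "g c + (n + 3) * lev' c \<le> (n + 3) + (n + 3) * lev c" if "c < m" for c
  proof (cases "c \<in> W'")
    case False
    with below that have "(lev c - ell A n m k W' c) * (n + 3) + (n + 3) * ell A n m k W' c = (n + 3) * lev c"
      by (metis add.commute le_add_diff_inverse mult.commute distrib_left)
    then show ?thesis using that False by (simp add: g_def decr lev')
  qed (simp add: g_def lev' that)
  have "t + (n + 3) * (\<Sum>c<m. lev' c) = (\<Sum>c<m. g c + (n + 3) * lev' c)"
    by (simp add: \<open>t = (\<Sum>c<m. g c)\<close> sum.distrib sum_distrib_left)
  also have "\<dots> \<le> (\<Sum>c<m. (n + 3) + (n + 3) * lev c)"
    by (rule sum_mono) (simp add: potential)
  also have "\<dots> = m * (n + 3) + (n + 3) * (\<Sum>c<m. lev c)"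
    by (simp add: sum.distrib sum_distrib_left)
  finally show "t + (n + 3) * (\<Sum>c<m. lev' c) \<le> m * (n + 3) + (n + 3) * (\<Sum>c<m. lev c)" .
qed

lemma sel_greedy:
  assumes levels: "\<forall>c<m. c \<notin> W \<longrightarrow> lev c = ell A n m k W c"
    and sel: "sel lev W [0..<m] = (b, v, t)"
  shows "t = m"
    and "v = 0 \<Longrightarrow> sejr_phase1 A n m k W W"
    and "0 < v \<Longrightarrow> b < m \<and> b \<notin> W \<and> ell A n m k W b = v \<and> (\<forall>d\<in>{..<m} - W. ell A n m k W d \<le> v)"
  using sel_spec[OF sel] levels by (auto intro: sejr_phase1.stop)

definition phase1_invariant ::
  "(nat \<Rightarrow> nat \<Rightarrow> bool) \<Rightarrow> nat \<Rightarrow> nat \<Rightarrow> nat \<Rightarrow> nat \<Rightarrow> nat set \<Rightarrow> nat \<Rightarrow> (nat \<Rightarrow> nat) \<Rightarrow> (nat \<Rightarrow> nat) \<Rightarrow> bool"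
where
  "phase1_invariant A n m k f W sz cnt lev \<longleftrightarrow>
     W \<subseteq> {..<m} \<and> card W = sz \<and> sz + f = k \<and> counts A n m W cnt \<and>
     (\<forall>c<m. c \<notin> W \<longrightarrow> lev c = ell A n m k W c)"

lemma phase1_invariant_insert:
  assumes "0 < n" and inv: "phase1_invariant A n m k (Suc f) W sz cnt lev" and "b < m" and "b \<notin> W"
    and upd: "upd_levels A n k (\<lambda>i. if i < n \<and> A i b then cnt i + 1 else cnt i) (insert b W) lev [0..<m]
      = (lev', t)"
  shows "phase1_invariant A n m k f (insert b W) (sz + 1) (\<lambda>i. if i < n \<and> A i b then cnt i + 1 else cnt i) lev'"
    and "t + (n + 3) * (\<Sum>c<m. lev' c) \<le> m * (n + 3) + (n + 3) * (\<Sum>c<m. lev c)"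
proof -
  from inv have W: "W \<subseteq> {..<m}" "card W = sz" "sz + Suc f = k" "counts A n m W cnt"
    and levels: "\<forall>c<m. c \<notin> W \<longrightarrow> lev c = ell A n m k W c"
    by (auto simp: phase1_invariant_def)
  have "finite W" using W(1) finite_subset by blast
  have counts: "counts A n m (insert b W) (\<lambda>i. if i < n \<and> A i b then cnt i + 1 else cnt i)"
    using W(4) \<open>b < m\<close> \<open>b \<notin> W\<close> \<open>finite W\<close> by (rule counts_insert)
  note round = upd_levels_round[OF \<open>0 < n\<close> counts subset_insertI levels upd]
  show "phase1_invariant A n m k f (insert b W) (sz + 1) (\<lambda>i. if i < n \<and> A i b then cnt i + 1 else cnt i) lev'"
    using W \<open>b < m\<close> \<open>b \<notin> W\<close> \<open>finite W\<close> counts round(1) by (auto simp: phase1_invariant_def)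
  show "t + (n + 3) * (\<Sum>c<m. lev' c) \<le> m * (n + 3) + (n + 3) * (\<Sum>c<m. lev c)"
    by (rule round(2))
qed

lemma phase1_spec:
  assumes "0 < n"
  shows "phase1_invariant A n m k f W sz cnt lev \<Longrightarrow> phase1 A n m k f (W, sz, cnt, lev) = ((W2, sz2, cnt2, lev2), t) \<Longrightarrow>
    sejr_phase1 A n m k W W2 \<and> W2 \<subseteq> {..<m} \<and> card W2 = sz2 \<and>
    t \<le> f * (m + 2 + n + m * (n + 3)) + (n + 3) * (\<Sum>c<m. lev c) + m + 2"
proof (induction f arbitrary: W sz cnt lev t)
  case 0
  then have "W \<subseteq> {..<m}" "card W = sz" "sz = k" "W2 = W" "sz2 = sz" "t = 1"
    by (auto simp: phase1_invariant_def)
  moreover have "sejr_phase1 A n m k W W"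
    by (rule sejr_phase1.stop) (simp add: \<open>card W = sz\<close> \<open>sz = k\<close>)
  ultimately show ?case by simp
next
  case (Suc f)
  then have W: "W \<subseteq> {..<m}" "card W = sz" "sz + Suc f = k"
    and levels: "\<forall>c<m. c \<notin> W \<longrightarrow> lev c = ell A n m k W c"
    by (auto simp: phase1_invariant_def)
  obtain b v t1 where sel: "sel lev W [0..<m] = (b, v, t1)" by (metis prod_cases3)
  note greedy = sel_greedy[OF levels sel]
  show ?case
  proof (cases "v = 0")
    case True
    then have "W2 = W" "sz2 = sz" "t = t1 + 2" using Suc.prems(2) W(3) sel by auto
    then show ?thesis using greedy True W by simp
  next
    case False
    with greedy have b: "b < m" "b \<notin> W" "ell A n m k W b = v"
      and maximal: "\<forall>d\<in>{..<m} - W. ell A n m k W d \<le> v" by auto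
    define cnt' where "cnt' = (\<lambda>i. if i < n \<and> A i b then cnt i + 1 else cnt i)"
    obtain lev' t2 where upd: "upd_levels A n k cnt' (insert b W) lev [0..<m] = (lev', t2)"
      by fastforce
    obtain st' t3 where rec: "phase1 A n m k f (insert b W, sz + 1, cnt', lev') = (st', t3)"
      by fastforce
    have "phase1 A n m k (Suc f) (W, sz, cnt, lev) = (st', t1 + 2 + n + t2 + t3)"
      using W(3) sel False upd rec by (simp add: cnt'_def Let_def)
    with Suc.prems(2) have st': "st' = (W2, sz2, cnt2, lev2)" and t: "t = t1 + 2 + n + t2 + t3"
      by auto
    note step = phase1_invariant_insert[OF \<open>0 < n\<close> Suc.prems(1) b(1,2) upd[unfolded cnt'_def],
        folded cnt'_def]
    from Suc.IH[OF step(1) rec[unfolded st']] have IH: "sejr_phase1 A n m k (insert b W) W2"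
      "W2 \<subseteq> {..<m}" "card W2 = sz2"
      "t3 \<le> f * (m + 2 + n + m * (n + 3)) + (n + 3) * (\<Sum>c<m. lev' c) + m + 2"
      by auto
    have "sejr_phase1 A n m k W W2"
      by (rule sejr_phase1.step[where c = b]) (use W b False maximal IH(1) in auto)
    moreover have "t \<le> Suc f * (m + 2 + n + m * (n + 3)) + (n + 3) * (\<Sum>c<m. lev c) + m + 2"
      using t IH(4) step(2) greedy(1) by simp
    ultimately show ?thesis using IH by simp
  qed
qed

lemma sejr_fast_cost_arith:
  fixes n m k :: nat
  assumes "0 < n" "0 < k" "k \<le> m"
    and "t \<le> k * (m + 2 + n + m * (n + 3)) + (n + 3) * (m * k) + m + 2"
  shows "m * (n + 2) + n + t + 1 \<le> 20 * (n * m * k)"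
proof -
  let ?N = "n * m * k"
  have "m * n \<le> ?N" "m \<le> ?N" "n \<le> ?N" "1 \<le> ?N" "k * m \<le> ?N" "k \<le> ?N" "k * n \<le> ?N"
    using assms by (simp_all add: Suc_le_eq)
  moreover have "m * (n + 2) + n + t + 1 \<le> m * n + 3 * m + n + 7 * (k * m) + 2 * k + k * n + 2 * ?N + 3"
    using assms(4) by (simp add: algebra_simps)
  ultimately show ?thesis by linarith
qed

lemma sejr_fast_eq:
  assumes "0 < n" and "0 < k" and "k \<le> m"
  obtains W t where "sejr_phase1 A n m k {} W" and "W \<subseteq> {..<m}" and "t \<le> 20 * (n * m * k)"
    and "sejr_fast alg3 A n m k =
      (if card W < k then (W \<union> set (fst (alg3 A n m k W)), t + snd (alg3 A n m k W)) else (W, t))"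
proof -
  define lev0 where "lev0 c = (if c < m then ell A n m k {} c else 0)" for c
  have init: "init_levels A n k [0..<m] = (lev0, m * (n + 2))"
    using init_levels_eq[OF \<open>0 < n\<close>, of A k "[0..<m]" m] by (simp add: lev0_def[abs_def])
  have "phase1_invariant A n m k k {} 0 (\<lambda>_. 0) lev0"
    by (simp add: phase1_invariant_def counts_empty lev0_def)
  moreover obtain W sz cnt lev t1 where p1: "phase1 A n m k k ({}, 0, \<lambda>_. 0, lev0) = ((W, sz, cnt, lev), t1)"
    by (metis prod.collapse)
  ultimately have W: "sejr_phase1 A n m k {} W" "W \<subseteq> {..<m}" "card W = sz"
    and t1: "t1 \<le> k * (m + 2 + n + m * (n + 3)) + (n + 3) * (\<Sum>c<m. lev0 c) + m + 2"
    using phase1_spec[OF \<open>0 < n\<close>] by blast+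
  have "(\<Sum>c<m. lev0 c) \<le> m * k"
    using sum_mono[of "{..<m}" lev0 "\<lambda>_. k"] ell_le[OF \<open>0 < n\<close>] by (simp add: lev0_def)
  then have "(n + 3) * (\<Sum>c<m. lev0 c) \<le> (n + 3) * (m * k)" by simp
  with t1 have "m * (n + 2) + n + t1 + 1 \<le> 20 * (n * m * k)"
    by (intro sejr_fast_cost_arith[OF assms]) linarith
  moreover have "sejr_fast alg3 A n m k =
      (if card W < k then (W \<union> set (fst (alg3 A n m k W)), (m * (n + 2) + n + t1 + 1) + snd (alg3 A n m k W))
       else (W, m * (n + 2) + n + t1 + 1))"
    by (cases "alg3 A n m k W") (simp add: sejr_fast_def init p1 W(3))
  ultimately show ?thesis using W that by blast
qed

theorem mainTheorem11:
  fixes alg3 :: alg3_t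
    and o3 :: "(nat \<Rightarrow> nat \<Rightarrow> bool) \<Rightarrow> nat \<Rightarrow> nat \<Rightarrow> nat \<Rightarrow> nat"
  assumes "\<exists>C3::nat. \<forall>A n m k W. 0 < n \<longrightarrow> 0 < k \<longrightarrow> k \<le> m \<longrightarrow> W \<subseteq> {..<m} \<longrightarrow> card W < k
             \<longrightarrow> snd (alg3 A n m k W) \<le> C3 * o3 A n m k"
  shows "\<exists>D::nat. \<forall>A n m k. 0 < n \<longrightarrow> 0 < k \<longrightarrow> k \<le> m \<longrightarrow>
           sejr_outcome A n m k alg3 (fst (sejr_fast alg3 A n m k)) \<and>
           snd (sejr_fast alg3 A n m k) \<le> D * (n * m * k + o3 A n m k)"
proof -
  obtain C3 where C3: "\<forall>A n m k W. 0 < n \<longrightarrow> 0 < k \<longrightarrow> k \<le> m \<longrightarrow> W \<subseteq> {..<m} \<longrightarrow> card W < k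
             \<longrightarrow> snd (alg3 A n m k W) \<le> C3 * o3 A n m k"
    using assms by blast
  have "sejr_outcome A n m k alg3 (fst (sejr_fast alg3 A n m k)) \<and>
        snd (sejr_fast alg3 A n m k) \<le> (20 + C3) * (n * m * k + o3 A n m k)"
    if size: "0 < n" "0 < k" "k \<le> m" for A n m k
  proof -
    obtain W t where W: "sejr_phase1 A n m k {} W" "W \<subseteq> {..<m}" and t: "t \<le> 20 * (n * m * k)"
      and fast: "sejr_fast alg3 A n m k =
        (if card W < k then (W \<union> set (fst (alg3 A n m k W)), t + snd (alg3 A n m k W)) else (W, t))"
      by (rule sejr_fast_eq[OF size])
    have "(if card W < k then snd (alg3 A n m k W) else 0) \<le> C3 * o3 A n m k"
      using C3 size W by auto
    with t have "t + (if card W < k then snd (alg3 A n m k W) else 0) \<le> 20 * (n * m * k) + C3 * o3 A n m k"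
      by (rule add_mono)
    also have "\<dots> \<le> (20 + C3) * (n * m * k + o3 A n m k)"
      by (simp add: algebra_simps)
    finally show ?thesis
      using W by (auto simp: sejr_outcome_def fast split: if_splits)
  qed
  then show ?thesis by blast
qed

end
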